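(* Let $I\subset(0,\infty)$ be an interval and let $f:I\to\mathbb{R}$ be differentiable on the interior $I^\circ$ of $I$. Let $m\in(0,1]$, $\alpha\in[0,1]$, $q>1$, $p$ with $\frac1p+\frac1q=1$, and $\theta>0$, and let $a,b$ be real numbers with $a<b$ and $a,\,b/m\in I^\circ$, such that $f'\in L[a,b]$. Suppose that $|f'|^q$ is harmonically $(\alpha,m)$-convex on $[a,b/m]$. Then $$\left|I_f(g;\theta,a,b)\right|\le \frac{a(b-a)}{2b}\left(\frac{1}{\theta p+1}\right)^{1/p}\left(\frac{|f'(a)|^q+m\alpha|f'(b/m)|^q}{\alpha+1}\right)^{1/q}\left[{}_2F_1\!\left(2p,\theta p+1;\theta p+2;1-\tfrac{a}{b}\right)^{1/p}+{}_2F_1\!\left(2p,1;\theta p+2;1-\tfrac{a}{b}\right)^{1/p}\right].$$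
   Context: A function $h:J\to\mathbb{R}$ on an interval $J\subset(0,\infty)$ is called harmonically $(\alpha,m)$-convex (with $\alpha\in[0,1]$, $m\in(0,1]$) if $h\left(\frac{mxy}{mty+(1-t)x}\right)\le t^{\alpha}h(x)+m(1-t^{\alpha})h(y)$ for all $x,y\in J$ and $t\in[0,1]$ (for which the left-hand side is defined, i.e. the argument lies in $J$). For $\varphi\in L[c,d]$ and $\theta>0$ the Riemann–Liouville integrals are $J^{\theta}_{c+}\varphi(x)=\frac{1}{\Gamma(\theta)}\int_c^x (x-t)^{\theta-1}\varphi(t)\,dt$ for $x>c$ and $J^{\theta}_{d-}\varphi(x)=\frac{1}{\Gamma(\theta)}\int_x^d (t-x)^{\theta-1}\varphi(t)\,dt$ for $x<d$, where $\Gamma$ is the Euler Gamma function. With $g(x)=1/x$, define $$I_f(g;\theta,a,b)=\frac{f(a)+f(b)}{2}-\frac{\Gamma(\theta+1)}{2}\left(\frac{ab}{b-a}\right)^{\theta}\left\{J^{\theta}_{1/a-}(f\circ g)(1/b)+J^{\theta}_{1/b+}(f\circ g)(1/a)\right\}.$$ The hypergeometric function is ${}_2F_1(a,b;c;z)=\frac{1}{\beta(b,c-b)}\int_0^1 t^{b-1}(1-t)^{c-b-1}(1-zt)^{-a}dt$ for $c>b>0$, $|z|<1$, where $\beta(x,y)=\int_0^1 t^{x-1}(1-t)^{y-1}dt$ is the Beta function. *)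

theory Defs
  imports "HOL-Analysis.Analysis"
begin

definition rpow :: "real \<Rightarrow> real \<Rightarrow> real" where
  "rpow t \<alpha> = (if t = 0 then (if \<alpha> = 0 then 1 else 0) else t powr \<alpha>)"

definition harm_alpha_m_convex :: "real \<Rightarrow> real \<Rightarrow> (real \<Rightarrow> real) \<Rightarrow> real set \<Rightarrow> bool" where
  "harm_alpha_m_convex \<alpha> m h J \<longleftrightarrow>
     (\<forall>x\<in>J. \<forall>y\<in>J. \<forall>t\<in>{0..1}.
        m * x * y / (m * t * y + (1 - t) * x) \<in> J \<longrightarrow>
        h (m * x * y / (m * t * y + (1 - t) * x))
          \<le> rpow t \<alpha> * h x + m * (1 - rpow t \<alpha>) * h y)"

definition RL_left :: "real \<Rightarrow> real \<Rightarrow> (real \<Rightarrow> real) \<Rightarrow> real \<Rightarrow> real" where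
  "RL_left c \<theta> \<phi> x = integral {c..x} (\<lambda>t. (x - t) powr (\<theta> - 1) * \<phi> t) / Gamma \<theta>"

definition RL_right :: "real \<Rightarrow> real \<Rightarrow> (real \<Rightarrow> real) \<Rightarrow> real \<Rightarrow> real" where
  "RL_right d \<theta> \<phi> x = integral {x..d} (\<lambda>t. (t - x) powr (\<theta> - 1) * \<phi> t) / Gamma \<theta>"

text \<open>I_f(g; theta, a, b) with g(x) = 1/x.\<close>
definition I_f :: "(real \<Rightarrow> real) \<Rightarrow> real \<Rightarrow> real \<Rightarrow> real \<Rightarrow> real" where
  "I_f f \<theta> a b = (f a + f b) / 2
     - Gamma (\<theta> + 1) / 2 * (a * b / (b - a)) powr \<theta>
       * (RL_right (1/a) \<theta> (f \<circ> (\<lambda>x. 1 / x)) (1/b) + RL_left (1/b) \<theta> (f \<circ> (\<lambda>x. 1 / x)) (1/a))"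

text \<open>Gauss hypergeometric function via Euler's integral representation (c > b > 0, |z| < 1).\<close>
definition hyp2F1 :: "real \<Rightarrow> real \<Rightarrow> real \<Rightarrow> real \<Rightarrow> real" where
  "hyp2F1 a b c z = integral {0..1} (\<lambda>t. t powr (b - 1) * (1 - t) powr (c - b - 1) * (1 - z * t) powr (- a))
                    / Beta b (c - b)"

end

theory Submission
  imports Defs
begin

text \<open>Substituting x = ab/(tb + (1 - t)a), whose reciprocal moves affinely from 1/b to 1/a, turns both
  Riemann--Liouville integrals into integrals over [0,1] of t^(\<theta>-1) f(x) and (1-t)^(\<theta>-1) f(x).
  Integrating by parts gives the identity
  I_f = ab(b-a)/2 \<cdot> \<integral> ((1-t)^\<theta> - t^\<theta>) f'(x) / (tb + (1-t)a)^2 dt over [0,1].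
  Splitting the kernel by the triangle inequality, H\<ouml>lder's inequality is applied to each half: the p-th
  powers of the weights (1-t)^\<theta>/(tb+(1-t)a)^2 and t^\<theta>/(tb+(1-t)a)^2 are Euler integrands of 2F1,
  while harmonic (\<alpha>,m)-convexity bounds |f'(x)|^q by t^\<alpha> |f'(a)|^q + m(1-t^\<alpha>) |f'(b/m)|^q,
  whose integral is (|f'(a)|^q + m\<alpha>|f'(b/m)|^q)/(\<alpha>+1).\<close>

lemma has_integral_unit_interval_rescale:
  fixes \<phi> :: "real \<Rightarrow> real"
  assumes "lo < hi" and "(\<phi> has_integral I) {0..1}"
  shows "((\<lambda>t. \<phi> ((t - lo) / (hi - lo))) has_integral (hi - lo) * I) {lo..hi}"
proof -
  have "((\<lambda>t. \<phi> ((1 / (hi - lo)) *\<^sub>R t + - lo / (hi - lo))) has_integral I /\<^sub>R (1 / (hi - lo)) ^ DIM(real))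
          (cbox ((0 - - lo / (hi - lo)) /\<^sub>R (1 / (hi - lo))) ((1 - - lo / (hi - lo)) /\<^sub>R (1 / (hi - lo))))"
    using assms by (intro has_integral_affinity') (auto simp: cbox_interval)
  moreover have "(1 - - lo / (hi - lo)) * (hi - lo) = hi"
    using assms(1) by (simp add: field_simps)
  ultimately show ?thesis
    using assms(1) by (simp add: cbox_interval diff_divide_distrib mult.commute)
qed

lemma has_integral_unit_interval_reflect:
  fixes \<phi> :: "real \<Rightarrow> real"
  assumes "(\<phi> has_integral I) {0..1}"
  shows "((\<lambda>u. \<phi> (1 - u)) has_integral I) {0..1}"
  using has_integral_affinity[of \<phi> I 0 1 "-1" 1] assms
  by (simp add: cbox_interval image_affinity_atLeastAtMost)

lemma absolutely_integrable_continuous_mult: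
  fixes k g :: "real \<Rightarrow> real"
  assumes "continuous_on {lo..hi} k" and "g absolutely_integrable_on {lo..hi}"
  shows "(\<lambda>t. k t * g t) absolutely_integrable_on {lo..hi}"
proof (rule absolutely_integrable_bounded_measurable_product_real)
  show "k \<in> borel_measurable (lebesgue_on {lo..hi})"
    using assms(1) by (intro continuous_imp_measurable_on_sets_lebesgue) auto
  show "bounded (k ` {lo..hi})"
    using assms(1) by (intro compact_imp_bounded compact_continuous_image) auto
qed (use assms in auto)

lemma has_integral_by_parts_absolutely_integrable:
  fixes k k' P P' :: "real \<Rightarrow> real"
  assumes "lo \<le> hi" and k: "continuous_on {lo..hi} k" and P: "continuous_on {lo..hi} P"
    and "\<And>t. t \<in> {lo<..<hi} \<Longrightarrow> (k has_real_derivative k' t) (at t)"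
    and "\<And>t. t \<in> {lo<..<hi} \<Longrightarrow> (P has_real_derivative P' t) (at t)"
    and P': "P' absolutely_integrable_on {lo..hi}"
  shows "((\<lambda>t. k' t * P t) has_integral
           k hi * P hi - k lo * P lo - integral {lo..hi} (\<lambda>t. k t * P' t)) {lo..hi}"
proof (rule integration_by_parts_interior_strong[OF bounded_bilinear_mult, of "{}" lo hi k P])
  have "(\<lambda>t. k t * P' t) integrable_on {lo..hi}"
    using absolutely_integrable_continuous_mult[OF k P'] by (simp add: absolutely_integrable_on_def)
  then show "((\<lambda>t. k t * P' t) has_integral k hi * P hi - k lo * P lo -
      (k hi * P hi - k lo * P lo - integral {lo..hi} (\<lambda>t. k t * P' t))) {lo..hi}"
    by (simp add: integrable_integral)
qed (use assms in \<open>auto simp: has_real_derivative_iff_has_vector_derivative\<close>)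

lemma abs_integral_kernel_diff_le:
  fixes k1 k2 g :: "real \<Rightarrow> real"
  assumes k1: "continuous_on {lo..hi} k1" and k2: "continuous_on {lo..hi} k2"
    and nonneg: "\<And>t. t \<in> {lo..hi} \<Longrightarrow> 0 \<le> k1 t \<and> 0 \<le> k2 t"
    and g: "g absolutely_integrable_on {lo..hi}"
  shows "\<bar>integral {lo..hi} (\<lambda>t. (k1 t - k2 t) * g t)\<bar>
           \<le> integral {lo..hi} (\<lambda>t. k1 t * \<bar>g t\<bar>) + integral {lo..hi} (\<lambda>t. k2 t * \<bar>g t\<bar>)"
proof -
  have "(\<lambda>t. \<bar>g t\<bar>) absolutely_integrable_on {lo..hi}"
    using absolutely_integrable_norm[OF g] by (simp add: o_def)
  then have int: "(\<lambda>t. k t * g t) integrable_on {lo..hi}" "(\<lambda>t. k t * \<bar>g t\<bar>) integrable_on {lo..hi}"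
    if "continuous_on {lo..hi} k" for k
    using absolutely_integrable_continuous_mult[OF that g] absolutely_integrable_continuous_mult[OF that]
    by (auto simp: absolutely_integrable_on_def)
  have "norm (integral {lo..hi} (\<lambda>t. (k1 t - k2 t) * g t))
      \<le> integral {lo..hi} (\<lambda>t. k1 t * \<bar>g t\<bar> + k2 t * \<bar>g t\<bar>)"
  proof (rule integral_norm_bound_integral)
    show "(\<lambda>t. (k1 t - k2 t) * g t) integrable_on {lo..hi}"
      using integrable_diff[OF int(1)[OF k1] int(1)[OF k2]] by (simp add: left_diff_distrib)
    show "(\<lambda>t. k1 t * \<bar>g t\<bar> + k2 t * \<bar>g t\<bar>) integrable_on {lo..hi}"
      by (intro integrable_add int(2) k1 k2)
    fix t assume "t \<in> {lo..hi}"
    then have "\<bar>k1 t - k2 t\<bar> \<le> k1 t + k2 t" using nonneg by (simp add: abs_le_iff)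
    then have "\<bar>k1 t - k2 t\<bar> * \<bar>g t\<bar> \<le> (k1 t + k2 t) * \<bar>g t\<bar>" by (rule mult_right_mono) simp
    then show "norm ((k1 t - k2 t) * g t) \<le> k1 t * \<bar>g t\<bar> + k2 t * \<bar>g t\<bar>"
      by (simp add: abs_mult distrib_right)
  qed
  then show ?thesis by (simp add: integral_add int(2) k1 k2)
qed

section \<open>H\<ouml>lder's inequality\<close>

lemma nonpos_if_le_every_pos_multiple:
  fixes x K :: real
  assumes "0 \<le> K" and "\<And>\<epsilon>. \<epsilon> > 0 \<Longrightarrow> x \<le> \<epsilon> * K"
  shows "x \<le> 0"
proof (rule ccontr)
  assume "\<not> x \<le> 0"
  then have "x \<le> x / (K + 1) * K" using assms(1) by (intro assms(2)) simp
  also have "\<dots> < x" using \<open>\<not> x \<le> 0\<close> assms(1) by (simp add: field_simps)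
  finally show False by simp
qed

lemma conjugate_exponent_gt_one:
  fixes p q :: real
  assumes "p > 1" and "1/p + 1/q = 1"
  shows "q > 1"
proof -
  have "0 < 1/p" "1/p < 1" using assms(1) by auto
  then have "0 < 1/q" "1/q < 1" using assms(2) by linarith+
  then show ?thesis by (simp add: field_simps)
qed

lemma integral_mult_le_Young:
  fixes w h G :: "real \<Rightarrow> real"
  assumes pq: "p > 1" "1/p + 1/q = 1" and AB: "A > 0" "B > 0"
    and W: "((\<lambda>t. w t powr p) has_integral W) S" and M: "(G has_integral M) S"
    and wh: "(\<lambda>t. w t * h t) integrable_on S"
    and nonneg: "\<And>t. t \<in> S \<Longrightarrow> 0 \<le> w t \<and> 0 \<le> h t"
    and major: "\<And>t. t \<in> S \<Longrightarrow> h t powr q \<le> G t"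
  shows "integral S (\<lambda>t. w t * h t) \<le> A * B * (W / (A powr p * p) + M / (B powr q * q))"
proof (rule has_integral_le[OF integrable_integral[OF wh]])
  have q: "q > 1" using conjugate_exponent_gt_one[OF pq] .
  show "((\<lambda>t. A * B * (w t powr p / (A powr p * p) + G t / (B powr q * q))) has_integral
          A * B * (W / (A powr p * p) + M / (B powr q * q))) S"
    by (intro has_integral_mult_right has_integral_add has_integral_divide W M)
  fix t assume t: "t \<in> S"
  have "w t / A * (h t / B) \<le> (w t / A) powr p / p + (h t / B) powr q / q"
    using nonneg[OF t] AB by (intro Youngs_inequality[OF pq(1) q pq(2)]) auto
  also have "\<dots> \<le> w t powr p / (A powr p * p) + G t / (B powr q * q)"
    using nonneg[OF t] major[OF t] AB pq q
    by (simp add: powr_divide divide_right_mono field_simps)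
  finally show "w t * h t \<le> A * B * (w t powr p / (A powr p * p) + G t / (B powr q * q))"
    using AB by (simp add: field_simps)
qed

lemma integral_mult_le_Holder:
  fixes w h G :: "real \<Rightarrow> real"
  assumes pq: "p > 1" "1/p + 1/q = 1"
    and W: "((\<lambda>t. w t powr p) has_integral W) S" and M: "(G has_integral M) S"
    and wh: "(\<lambda>t. w t * h t) integrable_on S"
    and nonneg: "\<And>t. t \<in> S \<Longrightarrow> 0 \<le> w t \<and> 0 \<le> h t"
    and major: "\<And>t. t \<in> S \<Longrightarrow> h t powr q \<le> G t"
  shows "integral S (\<lambda>t. w t * h t) \<le> W powr (1/p) * M powr (1/q)"
proof -
  have q: "q > 1" using conjugate_exponent_gt_one[OF pq] .
  have W0: "W \<ge> 0" by (rule has_integral_nonneg[OF W]) simp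
  have M0: "M \<ge> 0"
    by (rule has_integral_nonneg[OF M]) (meson major order_trans powr_ge_zero)
  note Young = integral_mult_le_Young[OF pq _ _ W M wh nonneg major]
  show ?thesis
  proof (cases "W > 0 \<and> M > 0")
    case True
    then show ?thesis
      using Young[of "W powr (1/p)" "M powr (1/q)"] pq q by (simp add: powr_powr)
  next
    \<comment> \<open>A vanishing norm: let the corresponding scaling factor in Young's bound tend to 0.\<close>
    case False
    have "integral S (\<lambda>t. w t * h t) \<le> 0"
    proof (cases "W = 0")
      case True
      show ?thesis
        by (rule nonpos_if_le_every_pos_multiple[of "M / q"]) (use Young[of _ 1] True M0 q in auto)
    next
      case False
      with \<open>\<not> (W > 0 \<and> M > 0)\<close> W0 M0 have "M = 0" by simp
      show ?thesis
        by (rule nonpos_if_le_every_pos_multiple[of "W / p"]) (use Young[of 1] \<open>M = 0\<close> W0 pq in auto)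
    qed
    with False W0 M0 pq q show ?thesis by auto
  qed
qed

section \<open>Euler integrals of the hypergeometric function\<close>

lemma Beta_right_one:
  fixes x :: real
  assumes "x > 0"
  shows "Beta x 1 = 1 / x"
proof -
  have "Gamma (x + 1) = x * Gamma x"
    using assms nonpos_Ints_nonpos[of x] by (intro Gamma_plus1) auto
  moreover have "Gamma x \<noteq> 0" using Gamma_real_pos[OF assms] by linarith
  ultimately show ?thesis by (simp add: Beta_def)
qed

lemma hyp2F1_eq_integral:
  fixes \<phi> :: "real \<Rightarrow> real"
  assumes "(\<phi> has_integral V) {0..1}"
    and "\<And>t. 0 < t \<Longrightarrow> t < 1 \<Longrightarrow>
           \<phi> t = t powr (\<beta> - 1) * (1 - t) powr (\<gamma> - \<beta> - 1) * (1 - z * t) powr (- s)"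
  shows "hyp2F1 s \<beta> \<gamma> z = V / Beta \<beta> (\<gamma> - \<beta>)"
proof -
  \<comment> \<open>Agreement is only required on the open interval: at the endpoints the Euler integrand
      may take junk values such as 0 powr 0 = 0.\<close>
  have "((\<lambda>t. t powr (\<beta> - 1) * (1 - t) powr (\<gamma> - \<beta> - 1) * (1 - z * t) powr (- s)) has_integral V) {0..1}"
    by (rule has_integral_spike_finite[OF _ _ assms(1), of "{0, 1}"]) (use assms(2) in auto)
  then show ?thesis unfolding hyp2F1_def by (simp add: integral_unique)
qed

lemma continuous_on_Euler_factor:
  fixes z s :: real
  assumes "z < 1"
  shows "continuous_on {0..1} (\<lambda>u. (1 - z * u) powr (- s))"
proof (rule continuous_on_powr')
  show "\<forall>u\<in>{0..1}. 0 \<le> 1 - z * u \<and> (1 - z * u = 0 \<longrightarrow> 0 < - s)"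
  proof
    fix u :: real assume "u \<in> {0..1}"
    then have "z * u \<le> max z 0"
      by (cases "z \<le> 0") (auto simp: mult_nonpos_nonneg mult_left_le)
    then have "z * u < 1" using assms by linarith
    then show "0 \<le> 1 - z * u \<and> (1 - z * u = 0 \<longrightarrow> 0 < - s)" by simp
  qed
qed (auto intro!: continuous_intros)

lemma has_integral_hyp2F1_succ:
  fixes z r s :: real
  assumes "z < 1" "r > 0"
  shows "((\<lambda>u. u powr r * (1 - z * u) powr (- s)) has_integral hyp2F1 s (r + 1) (r + 2) z / (r + 1)) {0..1}"
proof -
  have "continuous_on {0..1} (\<lambda>u. u powr r * (1 - z * u) powr (- s))"
    using assms by (intro continuous_intros continuous_on_Euler_factor continuous_on_powr') auto
  then obtain V where V: "((\<lambda>u. u powr r * (1 - z * u) powr (- s)) has_integral V) {0..1}"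
    using integrable_continuous_interval by blast
  moreover have "hyp2F1 s (r + 1) (r + 2) z = V * (r + 1)"
    using hyp2F1_eq_integral[OF V] Beta_right_one[of "r + 1"] assms by simp
  ultimately show ?thesis using assms by simp
qed

lemma has_integral_hyp2F1_one:
  fixes z r s :: real
  assumes "z < 1" "r > 0"
  shows "((\<lambda>u. (1 - u) powr r * (1 - z * u) powr (- s)) has_integral hyp2F1 s 1 (r + 2) z / (r + 1)) {0..1}"
proof -
  have "continuous_on {0..1} (\<lambda>u. (1 - u) powr r * (1 - z * u) powr (- s))"
    using assms by (intro continuous_intros continuous_on_Euler_factor continuous_on_powr') auto
  then obtain V where V: "((\<lambda>u. (1 - u) powr r * (1 - z * u) powr (- s)) has_integral V) {0..1}"
    using integrable_continuous_interval by blast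
  moreover have "hyp2F1 s 1 (r + 2) z = V * (r + 1)"
    using hyp2F1_eq_integral[OF V] Beta_right_one[of "r + 1"] assms by (simp add: Beta_commute add_ac)
  ultimately show ?thesis using assms by simp
qed

section \<open>The harmonic substitution\<close>

definition harmonic_point :: "real \<Rightarrow> real \<Rightarrow> real \<Rightarrow> real" where
  "harmonic_point a b t = a * b / (t * b + (1 - t) * a)"

lemma inverse_harmonic_point:
  assumes "a \<noteq> 0" "b \<noteq> 0"
  shows "1 / harmonic_point a b t = 1/b + t * (1/a - 1/b)"
  using assms by (simp add: harmonic_point_def field_simps)

lemma harmonic_point_denominator_pos:
  fixes a b t :: real
  assumes "0 < a" "0 < b" "t \<in> {0..1}"
  shows "0 < t * b + (1 - t) * a"
proof (cases "t = 0")
  case False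
  with assms show ?thesis by (intro add_pos_nonneg) auto
qed (use assms in simp)

lemma harmonic_point_image:
  assumes "0 < a" "a < b"
  shows "harmonic_point a b ` {0..1} = {a..b}"
proof
  show "harmonic_point a b ` {0..1} \<subseteq> {a..b}"
  proof
    fix x assume "x \<in> harmonic_point a b ` {0..1}"
    then obtain t where t: "t \<in> {0..1}" and x: "x = harmonic_point a b t" by blast
    have eq: "1 / x = 1/b + t * (1/a - 1/b)" "1 / x = 1/a - (1 - t) * (1/a - 1/b)"
      using assms by (simp_all add: x inverse_harmonic_point left_diff_distrib)
    have "0 \<le> 1/a - 1/b" using assms by (simp add: frac_le)
    then have "0 \<le> t * (1/a - 1/b)" "0 \<le> (1 - t) * (1/a - 1/b)" using t by simp_all
    then have "1/b \<le> 1/x" "1/x \<le> 1/a" using eq by linarith+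
    moreover from this(1) have "0 < x" using assms by (smt (verit) divide_pos_pos zero_less_divide_1_iff)
    ultimately show "x \<in> {a..b}"
      using assms by (auto simp: field_simps)
  qed
  show "{a..b} \<subseteq> harmonic_point a b ` {0..1}"
  proof
    fix x assume x: "x \<in> {a..b}"
    define t where "t = (1/x - 1/b) / (1/a - 1/b)"
    have "t \<in> {0..1}" using x assms by (auto simp: t_def field_simps)
    have "0 < 1/a - 1/b" using assms by (simp add: frac_less2)
    have "1 / harmonic_point a b t = 1/b + t * (1/a - 1/b)"
      using assms by (simp add: inverse_harmonic_point)
    also have "\<dots> = 1 / x" using assms \<open>0 < 1/a - 1/b\<close> unfolding t_def by simp
    finally have "1 / harmonic_point a b t = 1 / x" .
    then have "harmonic_point a b t = x" by simp
    with \<open>t \<in> {0..1}\<close> show "x \<in> harmonic_point a b ` {0..1}" by blast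
  qed
qed

lemma has_real_derivative_harmonic_point:
  assumes "t * b + (1 - t) * a \<noteq> 0"
  shows "(harmonic_point a b has_real_derivative - (a * b * (b - a)) / (t * b + (1 - t) * a)^2) (at t)"
  unfolding harmonic_point_def
  using assms by (auto intro!: derivative_eq_intros simp: field_simps power2_eq_square)

lemma has_real_derivative_comp_harmonic_point:
  fixes f :: "real \<Rightarrow> real"
  assumes ab: "0 < a" "a < b" and t: "t \<in> {0..1}"
    and diff: "f differentiable (at (harmonic_point a b t))"
  shows "((\<lambda>t. f (harmonic_point a b t)) has_real_derivative
           - (a * b * (b - a)) * (deriv f (harmonic_point a b t) / (t * b + (1 - t) * a)^2)) (at t)"
proof -
  have f': "(f has_real_derivative deriv f (harmonic_point a b t)) (at (harmonic_point a b t))"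
    using diff by (simp add: DERIV_deriv_iff_real_differentiable)
  have "t * b + (1 - t) * a \<noteq> 0"
    using harmonic_point_denominator_pos[of a b t] ab t by simp
  from DERIV_chain2[OF f' has_real_derivative_harmonic_point[OF this]] show ?thesis
    by (simp add: mult.commute)
qed

lemma inj_on_harmonic_point:
  assumes "0 < a" "a < b"
  shows "inj_on (harmonic_point a b) {0..1}"
proof (rule inj_onI)
  have ne: "a \<noteq> 0" "b \<noteq> 0" "1/a - 1/b \<noteq> 0" using assms by auto
  fix s t assume "harmonic_point a b s = harmonic_point a b t"
  then have "1 / harmonic_point a b s = 1 / harmonic_point a b t" by (rule arg_cong)
  then have "s * (1/a - 1/b) = t * (1/a - 1/b)" by (simp only: inverse_harmonic_point[OF ne(1,2)])
  with ne(3) show "s = t" by simp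
qed

lemma absolutely_integrable_comp_harmonic_point:
  fixes g :: "real \<Rightarrow> real"
  assumes "0 < a" "a < b" and g: "g absolutely_integrable_on {a..b}"
  shows "(\<lambda>t. g (harmonic_point a b t) / (t * b + (1 - t) * a)^2) absolutely_integrable_on {0..1}"
proof -
  have deriv: "(harmonic_point a b has_real_derivative
           - (a * b * (b - a)) / (t * b + (1 - t) * a)^2) (at t within {0..1})" if "t \<in> {0..1}" for t
  proof -
    have "0 < t * b + (1 - t) * a" using assms that by (intro harmonic_point_denominator_pos) auto
    then show ?thesis
      by (intro has_field_derivative_at_within[OF has_real_derivative_harmonic_point]) simp
  qed
  have "g absolutely_integrable_on harmonic_point a b ` {0..1}"
    using g harmonic_point_image[OF assms(1,2)] by simp
  then have "(\<lambda>t. \<bar>- (a * b * (b - a)) / (t * b + (1 - t) * a)^2\<bar> *\<^sub>R g (harmonic_point a b t))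
          absolutely_integrable_on {0..1}"
    using absolutely_integrable_change_of_variables_real[OF _ deriv inj_on_harmonic_point[OF assms(1,2)],
        where f = g] by simp
  then have "(\<lambda>t. (1 / (a * b * (b - a))) *\<^sub>R (\<bar>- (a * b * (b - a)) / (t * b + (1 - t) * a)^2\<bar>
                 *\<^sub>R g (harmonic_point a b t))) absolutely_integrable_on {0..1}"
    by (rule absolutely_integrable_scaleR_left)
  then show ?thesis
    by (rule absolutely_integrable_spike[OF _ negligible_empty]) (use assms in \<open>simp add: abs_mult\<close>)
qed

lemma has_integral_reciprocal_harmonic_point:
  fixes \<phi> f :: "real \<Rightarrow> real"
  assumes ab: "0 < a" "a < b"
    and X: "((\<lambda>t. \<phi> t * f (harmonic_point a b t)) has_integral X) {0..1}"
  shows "((\<lambda>x. \<phi> ((x - 1/b) / (1/a - 1/b)) * f (1/x)) has_integral (1/a - 1/b) * X) {1/b..1/a}"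
proof -
  have lohi: "1/b < 1/a" using ab by (simp add: frac_less2)
  have "harmonic_point a b ((x - 1/b) / (1/a - 1/b)) = 1/x" for x
  proof -
    have "1 / harmonic_point a b ((x - 1/b) / (1/a - 1/b)) = x"
      using ab lohi by (simp add: inverse_harmonic_point)
    then show ?thesis by (metis inverse_eq_divide inverse_inverse_eq)
  qed
  then show ?thesis
    using has_integral_unit_interval_rescale[OF lohi X] by simp
qed

section \<open>An integral identity for I_f\<close>

lemma RL_right_reciprocal_eq:
  fixes f :: "real \<Rightarrow> real"
  assumes ab: "0 < a" "a < b"
    and X: "((\<lambda>t. t powr (\<theta> - 1) * f (harmonic_point a b t)) has_integral X) {0..1}"
  shows "RL_right (1/a) \<theta> (f \<circ> (\<lambda>x. 1/x)) (1/b) = (1/a - 1/b) powr \<theta> * X / Gamma \<theta>"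
proof -
  define c where "c = 1/a - 1/b"
  have c: "c > 0" using ab by (simp add: c_def frac_less2)
  have "((\<lambda>t. (c powr (\<theta> - 1) * t powr (\<theta> - 1)) * f (harmonic_point a b t)) has_integral
          c powr (\<theta> - 1) * X) {0..1}"
    using has_integral_mult_right[OF X] by (simp add: mult.assoc)
  from has_integral_reciprocal_harmonic_point[OF ab this]
  have "((\<lambda>x. (c powr (\<theta> - 1) * ((x - 1/b) / c) powr (\<theta> - 1)) * f (1/x)) has_integral
          c * (c powr (\<theta> - 1) * X)) {1/b..1/a}"
    by (simp add: c_def)
  then have "((\<lambda>x. (x - 1/b) powr (\<theta> - 1) * f (1/x)) has_integral c powr \<theta> * X) {1/b..1/a}"
    using c powr_mult_base[of c "\<theta> - 1"] by (simp add: powr_divide mult.assoc[symmetric])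
  then have "integral {1/b..1/a} (\<lambda>x. (x - 1/b) powr (\<theta> - 1) * f (1/x)) = c powr \<theta> * X"
    by (rule integral_unique)
  then show ?thesis
    unfolding RL_right_def o_def c_def by (rule arg_cong[where f = "\<lambda>y. y / Gamma \<theta>"])
qed

lemma RL_left_reciprocal_eq:
  fixes f :: "real \<Rightarrow> real"
  assumes ab: "0 < a" "a < b"
    and X: "((\<lambda>t. (1 - t) powr (\<theta> - 1) * f (harmonic_point a b t)) has_integral X) {0..1}"
  shows "RL_left (1/b) \<theta> (f \<circ> (\<lambda>x. 1/x)) (1/a) = (1/a - 1/b) powr \<theta> * X / Gamma \<theta>"
proof -
  define c where "c = 1/a - 1/b"
  have c: "c > 0" using ab by (simp add: c_def frac_less2)
  have "((\<lambda>t. (c powr (\<theta> - 1) * (1 - t) powr (\<theta> - 1)) * f (harmonic_point a b t)) has_integral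
          c powr (\<theta> - 1) * X) {0..1}"
    using has_integral_mult_right[OF X] by (simp add: mult.assoc)
  from has_integral_reciprocal_harmonic_point[OF ab this]
  have "((\<lambda>x. (c powr (\<theta> - 1) * (1 - (x - 1/b) / c) powr (\<theta> - 1)) * f (1/x)) has_integral
          c * (c powr (\<theta> - 1) * X)) {1/b..1/a}"
    by (simp add: c_def)
  moreover have "1 - (x - 1/b) / c = (1/a - x) / c" for x
  proof -
    have "1 - (x - 1/b) / c = (c - (x - 1/b)) / c" using c by (simp add: diff_divide_distrib)
    then show ?thesis by (simp add: c_def)
  qed
  ultimately have "((\<lambda>x. (1/a - x) powr (\<theta> - 1) * f (1/x)) has_integral c powr \<theta> * X) {1/b..1/a}"
    using c powr_mult_base[of c "\<theta> - 1"] by (simp add: powr_divide mult.assoc[symmetric])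
  then have "integral {1/b..1/a} (\<lambda>x. (1/a - x) powr (\<theta> - 1) * f (1/x)) = c powr \<theta> * X"
    by (rule integral_unique)
  then show ?thesis
    unfolding RL_left_def o_def c_def by (rule arg_cong[where f = "\<lambda>y. y / Gamma \<theta>"])
qed

lemma harmonic_point_by_parts:
  fixes f :: "real \<Rightarrow> real" and a b \<theta> :: real
  defines "Q \<equiv> \<lambda>t. deriv f (harmonic_point a b t) / (t * b + (1 - t) * a)^2"
  assumes ab: "0 < a" "a < b" and \<theta>: "\<theta> > 0"
    and diff: "\<And>x. x \<in> {a..b} \<Longrightarrow> f differentiable (at x)"
    and int: "deriv f absolutely_integrable_on {a..b}"
  shows "((\<lambda>t. t powr (\<theta> - 1) * f (harmonic_point a b t)) has_integral
           (f a + a * b * (b - a) * integral {0..1} (\<lambda>t. t powr \<theta> * Q t)) / \<theta>) {0..1}"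
    and "((\<lambda>t. (1 - t) powr (\<theta> - 1) * f (harmonic_point a b t)) has_integral
           (f b - a * b * (b - a) * integral {0..1} (\<lambda>t. (1 - t) powr \<theta> * Q t)) / \<theta>) {0..1}"
proof -
  define C where "C = a * b * (b - a)"
  have Q: "Q absolutely_integrable_on {0..1}"
    unfolding Q_def by (rule absolutely_integrable_comp_harmonic_point[OF ab int])
  have dF: "((\<lambda>t. f (harmonic_point a b t)) has_real_derivative - C * Q t) (at t)"
    if "t \<in> {0..1}" for t
  proof -
    have "harmonic_point a b t \<in> {a..b}" using harmonic_point_image[OF ab] that by blast
    with has_real_derivative_comp_harmonic_point[OF ab that diff] show ?thesis
      by (simp add: Q_def C_def)
  qed
  have cF: "continuous_on {0..1} (\<lambda>t. f (harmonic_point a b t))"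
    using dF by (meson DERIV_isCont continuous_at_imp_continuous_on)
  have F': "(\<lambda>t. - C * Q t) absolutely_integrable_on {0..1}"
    using absolutely_integrable_continuous_mult[OF continuous_on_const Q] .
  have ends: "harmonic_point a b 0 = b" "harmonic_point a b 1 = a"
    using ab by (simp_all add: harmonic_point_def)
  have "((\<lambda>t. \<theta> * t powr (\<theta> - 1) * f (harmonic_point a b t)) has_integral
          f a + C * integral {0..1} (\<lambda>t. t powr \<theta> * Q t)) {0..1}"
    by (rule has_integral_eq_rhs[OF has_integral_by_parts_absolutely_integrable[where
          k = "\<lambda>t. t powr \<theta>" and P = "\<lambda>t. f (harmonic_point a b t)", OF _ _ cF _ _ F']])
      (use \<theta> dF in \<open>auto intro!: derivative_eq_intros continuous_intros continuous_on_powr'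
         simp: ends algebra_simps\<close>)
  from has_integral_mult_right[OF this, of "1 / \<theta>"] \<theta>
  show "((\<lambda>t. t powr (\<theta> - 1) * f (harmonic_point a b t)) has_integral
           (f a + a * b * (b - a) * integral {0..1} (\<lambda>t. t powr \<theta> * Q t)) / \<theta>) {0..1}"
    by (simp add: C_def)
  have "((\<lambda>t. \<theta> * (1 - t) powr (\<theta> - 1) * f (harmonic_point a b t)) has_integral
          f b - C * integral {0..1} (\<lambda>t. (1 - t) powr \<theta> * Q t)) {0..1}"
    by (rule has_integral_eq_rhs[OF has_integral_by_parts_absolutely_integrable[where
          k = "\<lambda>t. - ((1 - t) powr \<theta>)" and P = "\<lambda>t. f (harmonic_point a b t)", OF _ _ cF _ _ F']])
      (use \<theta> dF in \<open>auto intro!: derivative_eq_intros continuous_intros continuous_on_powr'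
         simp: ends algebra_simps\<close>)
  from has_integral_mult_right[OF this, of "1 / \<theta>"] \<theta>
  show "((\<lambda>t. (1 - t) powr (\<theta> - 1) * f (harmonic_point a b t)) has_integral
           (f b - a * b * (b - a) * integral {0..1} (\<lambda>t. (1 - t) powr \<theta> * Q t)) / \<theta>) {0..1}"
    by (simp add: C_def)
qed

lemma I_f_eq_harmonic_integral:
  fixes f :: "real \<Rightarrow> real" and a b \<theta> :: real
  defines "Q \<equiv> \<lambda>t. deriv f (harmonic_point a b t) / (t * b + (1 - t) * a)^2"
  assumes ab: "0 < a" "a < b" and \<theta>: "\<theta> > 0"
    and diff: "\<And>x. x \<in> {a..b} \<Longrightarrow> f differentiable (at x)"
    and int: "deriv f absolutely_integrable_on {a..b}"
  shows "I_f f \<theta> a b = a * b * (b - a) / 2 * integral {0..1} (\<lambda>t. ((1 - t) powr \<theta> - t powr \<theta>) * Q t)"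
proof -
  define J1 where "J1 = integral {0..1} (\<lambda>t. t powr \<theta> * Q t)"
  define J2 where "J2 = integral {0..1} (\<lambda>t. (1 - t) powr \<theta> * Q t)"
  define c where "c = 1/a - 1/b"
  have Q: "Q absolutely_integrable_on {0..1}"
    unfolding Q_def by (rule absolutely_integrable_comp_harmonic_point[OF ab int])
  have "continuous_on {0..1} (\<lambda>t. t powr \<theta>)" "continuous_on {0..1} (\<lambda>t. (1 - t) powr \<theta>)"
    using \<theta> by (intro continuous_on_powr'; auto intro!: continuous_intros)+
  then have "(\<lambda>t. t powr \<theta> * Q t) integrable_on {0..1}" "(\<lambda>t. (1 - t) powr \<theta> * Q t) integrable_on {0..1}"
    using absolutely_integrable_continuous_mult[OF _ Q] by (auto simp: absolutely_integrable_on_def)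
  then have J: "J2 - J1 = integral {0..1} (\<lambda>t. ((1 - t) powr \<theta> - t powr \<theta>) * Q t)"
    by (simp add: J1_def J2_def left_diff_distrib integral_diff)
  note parts = harmonic_point_by_parts[OF ab \<theta> diff int]
  have right: "RL_right (1/a) \<theta> (f \<circ> (\<lambda>x. 1/x)) (1/b) = c powr \<theta> * (f a + a * b * (b - a) * J1) / (\<theta> * Gamma \<theta>)"
    using RL_right_reciprocal_eq[OF ab parts(1)] by (simp add: J1_def c_def Q_def)
  have left: "RL_left (1/b) \<theta> (f \<circ> (\<lambda>x. 1/x)) (1/a) = c powr \<theta> * (f b - a * b * (b - a) * J2) / (\<theta> * Gamma \<theta>)"
    using RL_left_reciprocal_eq[OF ab parts(2)] by (simp add: J2_def c_def Q_def)
  have \<Gamma>: "Gamma (\<theta> + 1) = \<theta> * Gamma \<theta>"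
    using \<theta> nonpos_Ints_nonpos[of \<theta>] by (intro Gamma_plus1) auto
  have T: "\<theta> * Gamma \<theta> \<noteq> 0" using \<theta> by (simp add: less_imp_neq[symmetric])
  have cancel: "T / 2 * X * (Y * A / T + Y * B / T) = (X * Y) * (A + B) / 2" if "T \<noteq> 0"
    for T X Y A B :: real
    using that by (simp add: field_simps)
  have "Gamma (\<theta> + 1) / 2 * (a * b / (b - a)) powr \<theta>
      * (RL_right (1/a) \<theta> (f \<circ> (\<lambda>x. 1/x)) (1/b) + RL_left (1/b) \<theta> (f \<circ> (\<lambda>x. 1/x)) (1/a))
      = ((a * b / (b - a)) powr \<theta> * c powr \<theta>) * (f a + f b + a * b * (b - a) * (J1 - J2)) / 2"
    unfolding right left \<Gamma> cancel[OF T] by (simp add: algebra_simps)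
  also have "(a * b / (b - a)) powr \<theta> * c powr \<theta> = 1"
    using ab by (simp add: c_def powr_mult[symmetric] field_simps)
  finally have "I_f f \<theta> a b = a * b * (b - a) / 2 * (J2 - J1)"
    unfolding I_f_def by (simp add: field_simps o_def)
  then show ?thesis by (simp only: J)
qed

lemma harmonic_denominator_powr:
  fixes a b t p :: real
  assumes "0 < a" "a < b" "t \<in> {0..1}"
  shows "((t * b + (1 - t) * a)^2) powr p = b powr (2 * p) * (1 - (1 - a/b) * (1 - t)) powr (2 * p)"
proof -
  have D: "t * b + (1 - t) * a = b * (1 - (1 - a/b) * (1 - t))"
    using assms by (simp add: field_simps)
  have pos: "0 < t * b + (1 - t) * a" using harmonic_point_denominator_pos assms by simp
  then have "0 < 1 - (1 - a/b) * (1 - t)" using D assms by (simp add: zero_less_mult_iff)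
  have "((t * b + (1 - t) * a)^2) powr p = ((t * b + (1 - t) * a) powr 2) powr p"
    using pos by (simp add: powr_numeral)
  also have "\<dots> = (t * b + (1 - t) * a) powr (2 * p)" by (simp add: powr_powr)
  also have "\<dots> = b powr (2 * p) * (1 - (1 - a/b) * (1 - t)) powr (2 * p)"
    unfolding D using assms \<open>0 < 1 - (1 - a/b) * (1 - t)\<close> by (simp add: powr_mult)
  finally show ?thesis .
qed

lemma has_integral_harmonic_weight:
  fixes a b \<theta> p :: real
  defines "z \<equiv> 1 - a/b"
  assumes ab: "0 < a" "a < b" and r: "\<theta> * p > 0"
  shows "((\<lambda>t. ((1 - t) powr \<theta> / (t * b + (1 - t) * a)^2) powr p) has_integral
           hyp2F1 (2 * p) (\<theta> * p + 1) (\<theta> * p + 2) z / (\<theta> * p + 1) / b powr (2 * p)) {0..1}"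
    and "((\<lambda>t. (t powr \<theta> / (t * b + (1 - t) * a)^2) powr p) has_integral
           hyp2F1 (2 * p) 1 (\<theta> * p + 2) z / (\<theta> * p + 1) / b powr (2 * p)) {0..1}"
proof -
  \<comment> \<open>Since t b + (1 - t) a = b (1 - z (1 - t)), the weights are Euler integrands of 2F1 in 1 - t.\<close>
  have z: "z < 1" using ab by (simp add: z_def)
  have eq: "(w powr \<theta> / (t * b + (1 - t) * a)^2) powr p
      = (w powr (\<theta> * p) * (1 - z * (1 - t)) powr (- (2 * p))) / b powr (2 * p)"
    if "t \<in> {0..1}" for t w
  proof -
    have "(w powr \<theta> / (t * b + (1 - t) * a)^2) powr p
        = w powr (\<theta> * p) / (b powr (2 * p) * (1 - z * (1 - t)) powr (2 * p))"
      using harmonic_denominator_powr[OF ab that, of p] by (simp add: z_def powr_divide powr_powr)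
    also have "\<dots> = w powr (\<theta> * p) * (1 - z * (1 - t)) powr (- (2 * p)) / b powr (2 * p)"
      by (simp only: powr_minus_divide divide_divide_eq_left mult.commute times_divide_eq_right mult_1_right)
    finally show ?thesis .
  qed
  show "((\<lambda>t. ((1 - t) powr \<theta> / (t * b + (1 - t) * a)^2) powr p) has_integral
           hyp2F1 (2 * p) (\<theta> * p + 1) (\<theta> * p + 2) z / (\<theta> * p + 1) / b powr (2 * p)) {0..1}"
    using has_integral_divide[OF has_integral_unit_interval_reflect[OF has_integral_hyp2F1_succ[OF z r,
        where s = "2 * p"]], where c = "b powr (2 * p)"]
    by (rule has_integral_eq[rotated]) (rule eq[symmetric])
  show "((\<lambda>t. (t powr \<theta> / (t * b + (1 - t) * a)^2) powr p) has_integral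
           hyp2F1 (2 * p) 1 (\<theta> * p + 2) z / (\<theta> * p + 1) / b powr (2 * p)) {0..1}"
    using has_integral_divide[OF has_integral_unit_interval_reflect[OF has_integral_hyp2F1_one[OF z r,
        where s = "2 * p"]], where c = "b powr (2 * p)"]
    by (rule has_integral_eq[rotated]) (use eq[symmetric] in simp)
qed

lemma has_integral_rpow_unit_interval:
  assumes "\<alpha> \<ge> 0"
  shows "((\<lambda>t. rpow t \<alpha>) has_integral 1 / (\<alpha> + 1)) {0..1}"
proof -
  have "((\<lambda>t. t powr \<alpha>) has_integral 1 / (\<alpha> + 1)) {0..1}"
    using has_integral_powr_from_0[of \<alpha> 1] assms by simp
  from has_integral_spike_finite[OF _ _ this, of "{0}"] show ?thesis
    by (auto simp: rpow_def)
qed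

lemma has_integral_convex_majorant:
  assumes "\<alpha> \<ge> 0"
  shows "((\<lambda>t. rpow t \<alpha> * X + m * (1 - rpow t \<alpha>) * Y) has_integral (X + m * \<alpha> * Y) / (\<alpha> + 1)) {0..1}"
proof -
  have "((\<lambda>t. rpow t \<alpha> * X + m * (1 - rpow t \<alpha>) * Y) has_integral
          1 / (\<alpha> + 1) * X + m * (1 - 1 / (\<alpha> + 1)) * Y) {0..1}"
    using has_integral_rpow_unit_interval[OF assms] has_integral_const_real[of 1 0 1]
    by (intro has_integral_add has_integral_mult_left has_integral_mult_right has_integral_diff) auto
  moreover have "1 / (\<alpha> + 1) * X + m * (1 - 1 / (\<alpha> + 1)) * Y = (X + m * \<alpha> * Y) / (\<alpha> + 1)"
  proof -
    have "1 - 1 / (\<alpha> + 1) = \<alpha> / (\<alpha> + 1)" using assms by (simp add: field_simps)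
    then show ?thesis by (simp add: add_divide_distrib)
  qed
  ultimately show ?thesis by simp
qed

lemma harm_alpha_m_convex_harmonic_point:
  assumes conv: "harm_alpha_m_convex \<alpha> m h {a..b/m}"
    and ab: "0 < a" "a < b" and m: "0 < m" "m \<le> 1" and t: "t \<in> {0..1}"
  shows "h (harmonic_point a b t) \<le> rpow t \<alpha> * h a + m * (1 - rpow t \<alpha>) * h (b/m)"
proof -
  have "b \<le> b/m" using ab m by (simp add: field_simps)
  then have ends: "a \<in> {a..b/m}" "b/m \<in> {a..b/m}" using ab by auto
  have arg: "m * a * (b/m) / (m * t * (b/m) + (1 - t) * a) = harmonic_point a b t"
    using m by (simp add: harmonic_point_def)
  have "harmonic_point a b t \<in> {a..b}"
    using harmonic_point_image[OF ab] t by blast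
  then have "harmonic_point a b t \<in> {a..b/m}" using \<open>b \<le> b/m\<close> by auto
  then show ?thesis
    using conv ends t arg unfolding harm_alpha_m_convex_def by metis
qed

lemma abs_I_f_le_Holder:
  fixes f G :: "real \<Rightarrow> real" and a b \<theta> p q W1 W2 M :: real
  defines "D \<equiv> \<lambda>t. t * b + (1 - t) * a"
  assumes ab: "0 < a" "a < b" and \<theta>: "\<theta> > 0"
    and diff: "\<And>x. x \<in> {a..b} \<Longrightarrow> f differentiable (at x)"
    and int: "deriv f absolutely_integrable_on {a..b}"
    and pq: "p > 1" "1/p + 1/q = 1"
    and W1: "((\<lambda>t. ((1 - t) powr \<theta> / (D t)^2) powr p) has_integral W1) {0..1}"
    and W2: "((\<lambda>t. (t powr \<theta> / (D t)^2) powr p) has_integral W2) {0..1}"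
    and G: "(G has_integral M) {0..1}"
    and major: "\<And>t. t \<in> {0..1} \<Longrightarrow> \<bar>deriv f (harmonic_point a b t)\<bar> powr q \<le> G t"
  shows "\<bar>I_f f \<theta> a b\<bar> \<le> a * b * (b - a) / 2 * (W1 powr (1/p) + W2 powr (1/p)) * M powr (1/q)"
proof -
  define Q where "Q t = deriv f (harmonic_point a b t) / (D t)^2" for t
  have Q: "Q absolutely_integrable_on {0..1}"
    unfolding Q_def D_def by (rule absolutely_integrable_comp_harmonic_point[OF ab int])
  have D: "D t > 0" if "t \<in> {0..1}" for t
    using harmonic_point_denominator_pos ab that by (simp add: D_def)
  have k: "continuous_on {0..1} (\<lambda>t. (1 - t) powr \<theta>)" "continuous_on {0..1} (\<lambda>t. t powr \<theta>)"
    using \<theta> by (intro continuous_on_powr'; auto intro!: continuous_intros)+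
  have Holder: "integral {0..1} (\<lambda>t. k t * \<bar>Q t\<bar>) \<le> W powr (1/p) * M powr (1/q)"
    if "continuous_on {0..1} k" "\<And>t. t \<in> {0..1} \<Longrightarrow> k t \<ge> 0"
      and "((\<lambda>t. (k t / (D t)^2) powr p) has_integral W) {0..1}" for k W
  proof -
    have eq: "(\<lambda>t. k t * \<bar>Q t\<bar>) = (\<lambda>t. k t / (D t)^2 * \<bar>deriv f (harmonic_point a b t)\<bar>)"
      by (simp add: Q_def abs_divide)
    have "(\<lambda>t. k t * \<bar>Q t\<bar>) integrable_on {0..1}"
      using absolutely_integrable_continuous_mult[OF that(1) absolutely_integrable_norm[OF Q]]
      by (simp add: absolutely_integrable_on_def o_def)
    then show ?thesis
      unfolding eq using that D major by (intro integral_mult_le_Holder[OF pq that(3) G]) auto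
  qed
  have "I_f f \<theta> a b = a * b * (b - a) / 2 * integral {0..1} (\<lambda>t. ((1 - t) powr \<theta> - t powr \<theta>) * Q t)"
    unfolding Q_def D_def by (rule I_f_eq_harmonic_integral[OF ab \<theta> diff int])
  moreover have "0 < a * b * (b - a) / 2" using ab by simp
  ultimately have "\<bar>I_f f \<theta> a b\<bar>
      = a * b * (b - a) / 2 * \<bar>integral {0..1} (\<lambda>t. ((1 - t) powr \<theta> - t powr \<theta>) * Q t)\<bar>"
    by (simp only: abs_mult abs_of_pos)
  also have "\<dots> \<le> a * b * (b - a) / 2 * (integral {0..1} (\<lambda>t. (1 - t) powr \<theta> * \<bar>Q t\<bar>)
      + integral {0..1} (\<lambda>t. t powr \<theta> * \<bar>Q t\<bar>))"
    using ab by (intro mult_left_mono abs_integral_kernel_diff_le k Q) auto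
  also have "\<dots> \<le> a * b * (b - a) / 2 * (W1 powr (1/p) * M powr (1/q) + W2 powr (1/p) * M powr (1/q))"
    using ab k W1 W2 by (intro mult_left_mono add_mono Holder) auto
  finally show ?thesis by (simp only: mult.assoc distrib_right)
qed

theorem theorem7:
  fixes I :: "real set" and f :: "real \<Rightarrow> real"
    and m \<alpha> q p \<theta> a b :: real
  assumes "is_interval I" and "I \<subseteq> {0<..}"
    and "\<forall>x\<in>interior I. f differentiable (at x)"
    and "0 < m" "m \<le> 1" "0 \<le> \<alpha>" "\<alpha> \<le> 1" "q > 1" "1 / p + 1 / q = 1" "\<theta> > 0"
    and "a < b" "a \<in> interior I" "b / m \<in> interior I"
    and "(deriv f) absolutely_integrable_on {a..b}"
    and "harm_alpha_m_convex \<alpha> m (\<lambda>x. \<bar>deriv f x\<bar> powr q) {a..b / m}"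
  shows "\<bar>I_f f \<theta> a b\<bar> \<le> a * (b - a) / (2 * b) * (1 / (\<theta> * p + 1)) powr (1 / p)
           * ((\<bar>deriv f a\<bar> powr q + m * \<alpha> * \<bar>deriv f (b / m)\<bar> powr q) / (\<alpha> + 1)) powr (1 / q)
           * (hyp2F1 (2 * p) (\<theta> * p + 1) (\<theta> * p + 2) (1 - a / b) powr (1 / p)
              + hyp2F1 (2 * p) 1 (\<theta> * p + 2) (1 - a / b) powr (1 / p))"
proof -
  have ab: "0 < a" "a < b" using assms(2,11,12) interior_subset by fastforce+
  have "b \<le> b / m" using ab assms(4,5) by (simp add: field_simps)
  have "is_interval (interior I)"
    using assms(1) by (simp add: is_interval_convex_1 convex_interior)
  then have "{a..b/m} \<subseteq> interior I"
    using assms(12,13) unfolding is_interval_1 atLeastAtMost_iff subset_iff by blast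
  moreover have "{a..b} \<subseteq> {a..b/m}" using \<open>b \<le> b / m\<close> by auto
  ultimately have diff: "\<And>x. x \<in> {a..b} \<Longrightarrow> f differentiable (at x)"
    using assms(3) by blast
  have p: "p > 1" using conjugate_exponent_gt_one[of q p] assms(8,9) by (simp add: add.commute)
  then have r: "\<theta> * p > 0" using assms(10) by simp
  have major: "\<And>t. t \<in> {0..1} \<Longrightarrow> \<bar>deriv f (harmonic_point a b t)\<bar> powr q
      \<le> rpow t \<alpha> * \<bar>deriv f a\<bar> powr q + m * (1 - rpow t \<alpha>) * \<bar>deriv f (b / m)\<bar> powr q"
    using harm_alpha_m_convex_harmonic_point[OF assms(15) ab assms(4,5)] by simp
  define H1 where "H1 = hyp2F1 (2 * p) (\<theta> * p + 1) (\<theta> * p + 2) (1 - a / b)"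
  define H2 where "H2 = hyp2F1 (2 * p) 1 (\<theta> * p + 2) (1 - a / b)"
  define X where "X = (1 / (\<theta> * p + 1)) powr (1 / p)"
  define C where "C = ((\<bar>deriv f a\<bar> powr q + m * \<alpha> * \<bar>deriv f (b / m)\<bar> powr q) / (\<alpha> + 1)) powr (1 / q)"
  have weight: "(H / (\<theta> * p + 1) / b powr (2 * p)) powr (1 / p) = X * H powr (1 / p) / b^2" for H
    using ab p r by (simp add: X_def powr_divide powr_powr powr_numeral powr_mult)
  have "\<bar>I_f f \<theta> a b\<bar> \<le> a * b * (b - a) / 2
      * ((H1 / (\<theta> * p + 1) / b powr (2 * p)) powr (1 / p) + (H2 / (\<theta> * p + 1) / b powr (2 * p)) powr (1 / p))
      * C"
    unfolding H1_def H2_def C_def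
    by (rule abs_I_f_le_Holder[OF ab assms(10) diff assms(14) p assms(9)
          has_integral_harmonic_weight[OF ab r] has_integral_convex_majorant[OF assms(6)]])
      (use major in auto)
  also have "\<dots> = a * (b - a) / (2 * b) * X * C * (H1 powr (1 / p) + H2 powr (1 / p))"
    unfolding weight using ab by (simp add: field_simps power2_eq_square)
  finally show ?thesis unfolding X_def C_def H1_def H2_def .
qed

end
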